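(* For each integer $n \geq 3$ there is a hierarchical model (simplicial complex) $\Delta_n$ on $n$ binary random variables such that $$gap_-(\Delta_n) \geq 2^{n-3} - 1.$$
   Context: A hierarchical model on $n$ binary random variables is a simplicial complex $\Delta$ on the ground set $[n]=\{1,\dots,n\}$ (a collection of subsets of $[n]$ closed under taking subsets). A contingency table is a vector $\mathbf{u}=(u_{\mathbf{i}})_{\mathbf{i}\in\{0,1\}^n}$ of nonnegative entries indexed by $\{0,1\}^n$. For $F\in\Delta$, the $F$-margin of $\mathbf{u}$ is the vector indexed by $\mathbf{j}\in\{0,1\}^F$ whose $\mathbf{j}$-entry is $\sum_{\mathbf{i}:\ \mathbf{i}_F=\mathbf{j}} u_{\mathbf{i}}$, where $\mathbf{i}_F$ is the restriction of $\mathbf{i}$ to the coordinates in $F$. Let $A_\Delta$ be the matrix of the linear map sending $\mathbf{u}$ to the tuple of all its $F$-margins, $F\in\Delta$. Write $u_{\mathbf{0}}$ for the cell entry indexed by $(0,0,\dots,0)$. For a margin vector $\mathbf{b}$, the integer program $IP_\Delta(\mathbf{b})$ is: minimize $u_{\mathbf{0}}$ subject to $A_\Delta\mathbf{u}=\mathbf{b}$, $\mathbf{u}\ge 0$, $\mathbf{u}$ integral; the linear programming relaxation $LP_\Delta(\mathbf{b})$ is the same problem without the integrality condition. The integer programming gap $gap_-(\Delta)$ is the supremum, over all feasible margin vectors $\mathbf{b}$ (i.e. $\mathbf{b}=A_\Delta\mathbf{u}$ for some nonnegative integer table $\mathbf{u}$), of the difference between the optimal value of $IP_\Delta(\mathbf{b})$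 and the optimal value of $LP_\Delta(\mathbf{b})$. *)

theory Defs
  imports "HOL-Library.FuncSet" "HOL-Library.Extended_Real" Complex_Main
begin

definition cells :: "nat set \<Rightarrow> (nat \<Rightarrow> nat) set" where
  "cells F = (F \<rightarrow>\<^sub>E {0, 1})"

definition simplicial_complex :: "nat \<Rightarrow> nat set set \<Rightarrow> bool" where
  "simplicial_complex n \<Delta> \<longleftrightarrow>
     (\<forall>F\<in>\<Delta>. F \<subseteq> {1..n}) \<and> (\<forall>F\<in>\<Delta>. \<forall>G. G \<subseteq> F \<longrightarrow> G \<in> \<Delta>)"

definition zero_cell :: "nat \<Rightarrow> nat \<Rightarrow> nat" where
  "zero_cell n = (\<lambda>k\<in>{1..n}. 0)"

definition margin :: "nat \<Rightarrow> ((nat \<Rightarrow> nat) \<Rightarrow> real) \<Rightarrow> nat set \<Rightarrow> (nat \<Rightarrow> nat) \<Rightarrow> real" where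
  "margin n u F j = (\<Sum>i\<in>{i\<in>cells {1..n}. restrict i F = j}. u i)"

definition marginals :: "nat \<Rightarrow> nat set set \<Rightarrow> ((nat \<Rightarrow> nat) \<Rightarrow> real)
                         \<Rightarrow> nat set \<Rightarrow> (nat \<Rightarrow> nat) \<Rightarrow> real" where
  "marginals n \<Delta> u = (\<lambda>F j. if F \<in> \<Delta> \<and> j \<in> cells F then margin n u F j else 0)"

definition nonneg_table :: "nat \<Rightarrow> ((nat \<Rightarrow> nat) \<Rightarrow> real) \<Rightarrow> bool" where
  "nonneg_table n u \<longleftrightarrow> (\<forall>i\<in>cells {1..n}. u i \<ge> 0)"

definition integral_table :: "nat \<Rightarrow> ((nat \<Rightarrow> nat) \<Rightarrow> real) \<Rightarrow> bool" where
  "integral_table n u \<longleftrightarrow> (\<forall>i\<in>cells {1..n}. u i \<in> \<int>)"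

definition feasible_margins :: "nat \<Rightarrow> nat set set \<Rightarrow> (nat set \<Rightarrow> (nat \<Rightarrow> nat) \<Rightarrow> real) set" where
  "feasible_margins n \<Delta> =
     {marginals n \<Delta> u | u. nonneg_table n u \<and> integral_table n u}"

definition IP_opt :: "nat \<Rightarrow> nat set set \<Rightarrow> (nat set \<Rightarrow> (nat \<Rightarrow> nat) \<Rightarrow> real) \<Rightarrow> real" where
  "IP_opt n \<Delta> b = Inf {u (zero_cell n) | u.
      marginals n \<Delta> u = b \<and> nonneg_table n u \<and> integral_table n u}"

definition LP_opt :: "nat \<Rightarrow> nat set set \<Rightarrow> (nat set \<Rightarrow> (nat \<Rightarrow> nat) \<Rightarrow> real) \<Rightarrow> real" where
  "LP_opt n \<Delta> b = Inf {u (zero_cell n) | u.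
      marginals n \<Delta> u = b \<and> nonneg_table n u}"

definition gap_minus :: "nat \<Rightarrow> nat set set \<Rightarrow> ereal" where
  "gap_minus n \<Delta> = (SUP b\<in>feasible_margins n \<Delta>. ereal (IP_opt n \<Delta> b - LP_opt n \<Delta> b))"

end

theory Submission
  imports Defs
begin

(*
  Let X = {3..n} and R = 2^(n-3). The complex has facets {2..n}, {1,2} and {1} \<union> (X - {k});
  its non-faces are {1} \<union> X and {1,2} \<union> T for nonempty T \<subseteq> X.  Let u be the integer table
  with u_0 = R - 1, u_i = R on the other cells that vanish on X or whose parity on X differs
  from i_2, and u_i = 0 elsewhere.

  The sum z of the characters of all non-faces has vanishing margins, z_0 = 2R, z \<le> 2R, and
  z vanishes off the support of u; so u - (R-1)/(2R) z is a nonnegative real table with the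
  margins of u and entry 0 at the zero cell.

  Conversely, a nonnegative table w with these margins vanishes off the support of u (look at
  the {2..n}-margin), and pairing w with a functional that is a sum of functions of the
  coordinates in {1} \<union> T (\<emptyset> \<noteq> T \<subset> X) and in {1,2} yields
  (R-1) w_0 + R w_e = (R-1)^2 + R^2, where e is the unit cell in direction 2.  If w is
  integral, this forces w_0 \<equiv> -1 (mod R), hence w_0 \<ge> R - 1.
*)

definition spin :: "(nat \<Rightarrow> nat) \<Rightarrow> nat \<Rightarrow> real" where
  "spin i c = (if i c = 0 then 1 else -1)"

definition character :: "nat set \<Rightarrow> (nat \<Rightarrow> nat) \<Rightarrow> real" where
  "character S i = (\<Prod>c\<in>S. spin i c)"

definition flip :: "nat \<Rightarrow> (nat \<Rightarrow> nat) \<Rightarrow> nat \<Rightarrow> nat" where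
  "flip c i = i(c := 1 - i c)"

lemma finite_cells: "finite F \<Longrightarrow> finite (cells F)"
  unfolding cells_def by (rule finite_PiE) auto

lemma cell_value: "i \<in> cells F \<Longrightarrow> c \<in> F \<Longrightarrow> i c = 0 \<or> i c = 1"
  unfolding cells_def by (drule PiE_mem) auto

lemma cells_eqI: "i \<in> cells F \<Longrightarrow> j \<in> cells F \<Longrightarrow> (\<And>c. c \<in> F \<Longrightarrow> i c = j c) \<Longrightarrow> i = j"
  unfolding cells_def by (rule PiE_ext)

lemma zero_cell_in_cells: "zero_cell n \<in> cells {1..n}"
  by (simp add: zero_cell_def cells_def)

lemma flip_in_cells: "i \<in> cells F \<Longrightarrow> c \<in> F \<Longrightarrow> flip c i \<in> cells F"
  by (auto simp: cells_def flip_def PiE_iff extensional_def)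

lemma flip_flip: "i \<in> cells F \<Longrightarrow> c \<in> F \<Longrightarrow> flip c (flip c i) = i"
  using cell_value[of i F c] by (auto simp: flip_def)

lemma restrict_flip: "c \<notin> F \<Longrightarrow> restrict (flip c i) F = restrict i F"
  by (auto simp: flip_def restrict_def)

lemma character_flip:
  assumes "i \<in> cells F" "c \<in> F" "c \<in> S" "finite S"
  shows "character S (flip c i) = - character S i"
proof -
  have "character S (flip c i) = spin (flip c i) c * (\<Prod>c'\<in>S - {c}. spin (flip c i) c')"
    unfolding character_def using assms(4,3) by (rule prod.remove)
  also have "(\<Prod>c'\<in>S - {c}. spin (flip c i) c') = (\<Prod>c'\<in>S - {c}. spin i c')"
    by (intro prod.cong) (auto simp: spin_def flip_def)
  also have "spin (flip c i) c = - spin i c"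
    using cell_value[OF assms(1,2)] by (auto simp: spin_def flip_def)
  finally show ?thesis
    unfolding character_def using assms(3,4) by (simp add: prod.remove)
qed

lemma character_restrict: "T \<subseteq> G \<Longrightarrow> character T (restrict i G) = character T i"
  unfolding character_def spin_def by (intro prod.cong) auto

lemma character_cases: "character S i = 1 \<or> character S i = -1"
  unfolding character_def by (induction S rule: infinite_finite_induct) (auto simp: spin_def)

lemma sum_character_Pow:
  assumes "finite X"
  shows "(\<Sum>T\<in>Pow X. character T i) = (if \<forall>c\<in>X. i c = 0 then 2 ^ card X else 0)"
proof -
  have "(\<Sum>T\<in>Pow X. character T i) = (\<Prod>c\<in>X. spin i c + 1)"
    using prod_add[OF assms, of "spin i" "\<lambda>_. 1"] by (simp add: character_def)
  also have "\<dots> = (if \<forall>c\<in>X. i c = 0 then 2 ^ card X else 0)"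
    using assms by (auto simp: spin_def prod_zero_iff)
  finally show ?thesis .
qed

lemma margin_eq_0_if_flip_odd:
  assumes "c \<in> {1..n}" "c \<notin> F"
    and "\<And>i. i \<in> cells {1..n} \<Longrightarrow> f (flip c i) = - f i"
  shows "margin n f F j = 0"
proof -
  let ?A = "{i \<in> cells {1..n}. restrict i F = j}"
  have "sum f ?A = sum (\<lambda>i. - f i) ?A"
    by (rule sum.reindex_bij_witness[where i="flip c" and j="flip c"])
      (use assms flip_flip flip_in_cells restrict_flip in auto)
  then show ?thesis by (simp add: margin_def sum_negf)
qed

lemma margin_character_eq_0:
  assumes "S \<subseteq> {1..n}" "\<not> S \<subseteq> F"
  shows "margin n (character S) F j = 0"
proof -
  obtain c where "c \<in> S" "c \<notin> F" using assms(2) by blast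
  moreover have "finite S" using assms(1) finite_subset by blast
  ultimately show ?thesis
    using assms(1) by (intro margin_eq_0_if_flip_odd[of c]) (auto intro: character_flip)
qed

lemma margin_sum_nonface_characters_eq_0:
  assumes "simplicial_complex n \<Delta>" "F \<in> \<Delta>"
  shows "margin n (\<lambda>i. \<Sum>S\<in>Pow {1..n} - \<Delta>. character S i) F j = 0"
proof -
  have "margin n (\<lambda>i. \<Sum>S\<in>Pow {1..n} - \<Delta>. character S i) F j
      = (\<Sum>S\<in>Pow {1..n} - \<Delta>. margin n (character S) F j)"
    unfolding margin_def by (rule sum.swap)
  also have "\<dots> = 0"
  proof (intro sum.neutral ballI)
    fix S assume S: "S \<in> Pow {1..n} - \<Delta>"
    with assms have "\<not> S \<subseteq> F" unfolding simplicial_complex_def by blast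
    with S show "margin n (character S) F j = 0" by (intro margin_character_eq_0) auto
  qed
  finally show ?thesis .
qed

lemma sum_restrict_mult_eq_sum_margin:
  assumes "F \<subseteq> {1..n}"
  shows "(\<Sum>i\<in>cells {1..n}. g (restrict i F) * w i) = (\<Sum>j\<in>cells F. g j * margin n w F j)"
proof -
  have "(\<lambda>i. restrict i F) ` cells {1..n} \<subseteq> cells F"
    using assms by (fastforce simp: cells_def restrict_PiE_iff dest: PiE_mem)
  then have "(\<Sum>i\<in>cells {1..n}. g (restrict i F) * w i)
      = (\<Sum>j\<in>cells F. \<Sum>i\<in>{i \<in> cells {1..n}. restrict i F = j}. g (restrict i F) * w i)"
    using assms by (intro sum.group[symmetric] finite_cells) (auto intro: finite_subset)
  also have "\<dots> = (\<Sum>j\<in>cells F. g j * margin n w F j)"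
    unfolding margin_def by (intro sum.cong refl) (auto simp: sum_distrib_left)
  finally show ?thesis .
qed

lemma sum_restrict_mult_eq_if_marginals_eq:
  assumes "F \<in> \<Delta>" "F \<subseteq> {1..n}" "marginals n \<Delta> w = marginals n \<Delta> u"
  shows "(\<Sum>i\<in>cells {1..n}. g (restrict i F) * w i) = (\<Sum>i\<in>cells {1..n}. g (restrict i F) * u i)"
proof -
  have "margin n w F j = margin n u F j" if "j \<in> cells F" for j
    using fun_cong[OF fun_cong[OF assms(3), of F], of j] assms(1) that by (simp add: marginals_def)
  then show ?thesis
    unfolding sum_restrict_mult_eq_sum_margin[OF assms(2)] by (intro sum.cong) simp_all
qed

lemma gap_minus_ge:
  assumes u: "nonneg_table n u" "integral_table n u"
    and ip: "\<And>w. nonneg_table n w \<Longrightarrow> integral_table n w \<Longrightarrow>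
               marginals n \<Delta> w = marginals n \<Delta> u \<Longrightarrow> a \<le> w (zero_cell n)"
    and v: "nonneg_table n v" "marginals n \<Delta> v = marginals n \<Delta> u"
  shows "ereal (a - v (zero_cell n)) \<le> gap_minus n \<Delta>"
proof -
  let ?b = "marginals n \<Delta> u"
  have "a \<le> IP_opt n \<Delta> ?b"
    unfolding IP_opt_def using u ip by (intro cInf_greatest) auto
  moreover have "LP_opt n \<Delta> ?b \<le> v (zero_cell n)"
    unfolding LP_opt_def
  proof (rule cInf_lower)
    show "v (zero_cell n) \<in> {w (zero_cell n) |w. marginals n \<Delta> w = ?b \<and> nonneg_table n w}"
      using v by blast
    show "bdd_below {w (zero_cell n) |w. marginals n \<Delta> w = ?b \<and> nonneg_table n w}"
      by (rule bdd_belowI[of _ 0]) (use zero_cell_in_cells[of n] in \<open>auto simp: nonneg_table_def\<close>)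
  qed
  moreover have "?b \<in> feasible_margins n \<Delta>"
    using u unfolding feasible_margins_def by blast
  ultimately show ?thesis
    unfolding gap_minus_def by (intro SUP_upper2[of ?b]) simp_all
qed

definition gap_complex :: "nat \<Rightarrow> nat set set" where
  "gap_complex n = {S. S \<subseteq> {1..n} \<and> (1 \<notin> S \<or> S \<subseteq> {1,2} \<or> (2 \<notin> S \<and> \<not> {3..n} \<subseteq> S))}"

lemma simplicial_complex_gap_complex: "simplicial_complex n (gap_complex n)"
  unfolding simplicial_complex_def gap_complex_def by blast

lemma nonfaces_gap_complex:
  assumes "n \<ge> 3"
  shows "Pow {1..n} - gap_complex n = insert (insert 1 {3..n}) ((\<union>) {1,2} ` (Pow {3..n} - {{}}))"
proof (intro equalityI subsetI)
  fix S assume S: "S \<in> Pow {1..n} - gap_complex n"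
  show "S \<in> insert (insert 1 {3..n}) ((\<union>) {1,2} ` (Pow {3..n} - {{}}))"
  proof (cases "2 \<in> S")
    case True
    with S have "S = {1,2} \<union> (S - {1,2})" "S - {1,2} \<in> Pow {3..n} - {{}}"
      by (auto simp: gap_complex_def)
    then show ?thesis by blast
  next
    case False
    with S have "S \<subseteq> {1..n} - {2}" "insert 1 {3..n} \<subseteq> S"
      by (auto simp: gap_complex_def)
    moreover have "{1..n} - {2} = insert 1 {3..n}"
      using assms by auto
    ultimately have "S = insert 1 {3..n}" by blast
    then show ?thesis by blast
  qed
next
  fix S assume "S \<in> insert (insert 1 {3..n}) ((\<union>) {1,2} ` (Pow {3..n} - {{}}))"
  then consider "S = insert 1 {3..n}" | T t where "S = {1,2} \<union> T" "T \<subseteq> {3..n}" "t \<in> T"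
    by blast
  then show "S \<in> Pow {1..n} - gap_complex n"
  proof cases
    case 1
    with assms have "3 \<in> S" by simp
    with 1 assms show ?thesis by (auto simp: gap_complex_def)
  next
    case 2
    then have "t \<notin> {1,2}" by auto
    with 2 assms show ?thesis by (auto simp: gap_complex_def)
  qed
qed

definition scale :: "nat \<Rightarrow> real" where
  "scale n = 2 ^ (n - 3)"

definition tail_zero :: "nat \<Rightarrow> (nat \<Rightarrow> nat) \<Rightarrow> bool" where
  "tail_zero n i \<longleftrightarrow> (\<forall>c\<in>{3..n}. i c = 0)"

definition in_support :: "nat \<Rightarrow> (nat \<Rightarrow> nat) \<Rightarrow> bool" where
  "in_support n i \<longleftrightarrow> tail_zero n i \<or> character {3..n} i \<noteq> spin i 2"

definition nonface_sum :: "nat \<Rightarrow> (nat \<Rightarrow> nat) \<Rightarrow> real" where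
  "nonface_sum n i = (\<Sum>S\<in>Pow {1..n} - gap_complex n. character S i)"

definition ip_table :: "nat \<Rightarrow> (nat \<Rightarrow> nat) \<Rightarrow> real" where
  "ip_table n i = (if i = zero_cell n then scale n - 1 else if in_support n i then scale n else 0)"

definition lp_table :: "nat \<Rightarrow> (nat \<Rightarrow> nat) \<Rightarrow> real" where
  "lp_table n i = ip_table n i - (scale n - 1) / (2 * scale n) * nonface_sum n i"

lemma scale_ge_1: "scale n \<ge> 1"
  by (simp add: scale_def)

lemma tail_zero_zero_cell: "tail_zero n (zero_cell n)"
  by (simp add: tail_zero_def zero_cell_def)

lemma in_support_zero_cell: "in_support n (zero_cell n)"
  by (simp add: in_support_def tail_zero_zero_cell)

lemma character_tail_zero: "tail_zero n i \<Longrightarrow> character {3..n} i = 1"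
  unfolding character_def tail_zero_def spin_def by (intro prod.neutral) auto

lemma sum_character_nonempty_tail:
  assumes "n \<ge> 3"
  shows "(\<Sum>T\<in>Pow {3..n} - {{}}. character T i) = (if tail_zero n i then 2 * scale n else 0) - 1"
proof -
  have "(2::real) ^ card {3..n} = 2 * scale n"
    using assms by (simp add: scale_def Suc_diff_le numeral_3_eq_3 flip: power_Suc)
  then have "(\<Sum>T\<in>Pow {3..n}. character T i) = (if tail_zero n i then 2 * scale n else 0)"
    by (simp add: sum_character_Pow tail_zero_def)
  then show ?thesis
    by (simp add: sum_diff1 character_def)
qed

lemma sum_character_proper_tail:
  assumes "n \<ge> 3"
  shows "(\<Sum>T\<in>Pow {3..n} - {{}, {3..n}}. character T i)
    = (if tail_zero n i then 2 * scale n else 0) - 1 - character {3..n} i"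
proof -
  have "Pow {3..n} - {{}, {3..n}} = (Pow {3..n} - {{}}) - {{3..n}}"
    by auto
  moreover have "{3..n} \<in> Pow {3..n} - {{}}"
    using assms by auto
  ultimately show ?thesis
    by (simp add: sum_diff1 sum_character_nonempty_tail[OF assms])
qed

lemma nonface_sum_eq:
  assumes "n \<ge> 3"
  shows "nonface_sum n i = spin i 1 *
    (character {3..n} i + spin i 2 * ((if tail_zero n i then 2 * scale n else 0) - 1))"
proof -
  let ?P = "Pow {3..n} - {{}}"
  have top: "insert 1 {3..n} \<notin> (\<union>) {1,2} ` ?P"
    by (auto dest!: arg_cong[where f = "\<lambda>S. 2 \<in> S"])
  have inj: "inj_on ((\<union>) {1,2}) ?P"
    by (rule inj_on_inverseI[where g = "\<lambda>S. S - {1,2}"]) auto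
  have character_union: "character ({1,2} \<union> T) i = spin i 1 * spin i 2 * character T i"
    if "T \<in> ?P" for T
  proof -
    from that have "finite T" "1 \<notin> T" "2 \<notin> T"
      using finite_subset by auto
    then show ?thesis
      by (simp add: character_def)
  qed
  have "nonface_sum n i = character (insert 1 {3..n}) i + (\<Sum>S\<in>(\<union>) {1,2} ` ?P. character S i)"
    unfolding nonface_sum_def nonfaces_gap_complex[OF assms] using top by (intro sum.insert) auto
  also have "(\<Sum>S\<in>(\<union>) {1,2} ` ?P. character S i) = (\<Sum>T\<in>?P. spin i 1 * spin i 2 * character T i)"
    unfolding sum.reindex[OF inj] comp_def by (intro sum.cong refl character_union)
  also have "\<dots> = spin i 1 * spin i 2 * ((if tail_zero n i then 2 * scale n else 0) - 1)"
    by (simp add: sum_distrib_left[symmetric] sum_character_nonempty_tail[OF assms])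
  finally show ?thesis
    by (simp add: character_def algebra_simps)
qed

lemma nonface_sum_zero_cell:
  assumes "n \<ge> 3"
  shows "nonface_sum n (zero_cell n) = 2 * scale n"
proof -
  have "spin (zero_cell n) 1 = 1" "spin (zero_cell n) 2 = 1"
    using assms by (simp_all add: spin_def zero_cell_def)
  then show ?thesis
    using assms by (simp add: nonface_sum_eq tail_zero_zero_cell character_tail_zero)
qed

lemma nonface_sum_le: "n \<ge> 3 \<Longrightarrow> nonface_sum n i \<le> 2 * scale n"
  using character_cases[of "{3..n}" i] scale_ge_1[of n]
  by (auto simp: nonface_sum_eq spin_def)

lemma nonface_sum_outside_support: "n \<ge> 3 \<Longrightarrow> \<not> in_support n i \<Longrightarrow> nonface_sum n i = 0"
  by (simp add: nonface_sum_eq in_support_def)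

lemma nonneg_ip_table: "nonneg_table n (ip_table n)"
  using scale_ge_1[of n] by (auto simp: nonneg_table_def ip_table_def)

lemma integral_ip_table: "integral_table n (ip_table n)"
  by (auto simp: integral_table_def ip_table_def scale_def)

lemma lp_table_zero_cell: "n \<ge> 3 \<Longrightarrow> lp_table n (zero_cell n) = 0"
  using scale_ge_1[of n] by (simp add: lp_table_def ip_table_def nonface_sum_zero_cell)

lemma nonneg_lp_table:
  assumes "n \<ge> 3"
  shows "nonneg_table n (lp_table n)"
  unfolding nonneg_table_def
proof
  fix i
  have "(scale n - 1) / (2 * scale n) * nonface_sum n i \<le> (scale n - 1) / (2 * scale n) * (2 * scale n)"
    using scale_ge_1[of n] nonface_sum_le[OF assms] by (intro mult_left_mono) auto
  also have "\<dots> = scale n - 1"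
    using scale_ge_1[of n] by simp
  finally show "lp_table n i \<ge> 0"
    using assms scale_ge_1[of n] lp_table_zero_cell[OF assms]
    by (auto simp: lp_table_def ip_table_def nonface_sum_outside_support)
qed

lemma marginals_lp_table:
  assumes "n \<ge> 3"
  shows "marginals n (gap_complex n) (lp_table n) = marginals n (gap_complex n) (ip_table n)"
proof (intro ext)
  fix F j
  have "margin n (lp_table n) F j
      = margin n (ip_table n) F j - (scale n - 1) / (2 * scale n) * margin n (nonface_sum n) F j"
    by (simp add: margin_def lp_table_def sum_subtractf sum_distrib_left)
  moreover have "margin n (nonface_sum n) F j = 0" if "F \<in> gap_complex n"
    unfolding nonface_sum_def
    by (rule margin_sum_nonface_characters_eq_0[OF simplicial_complex_gap_complex that])
  ultimately show "marginals n (gap_complex n) (lp_table n) F j = marginals n (gap_complex n) (ip_table n) F j"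
    by (simp add: marginals_def)
qed

lemma in_support_restrict: "n \<ge> 2 \<Longrightarrow> in_support n (restrict i {2..n}) = in_support n i"
  by (simp add: in_support_def tail_zero_def character_restrict spin_def)

lemma vanishes_outside_support:
  assumes "n \<ge> 3" "nonneg_table n w"
    and "marginals n (gap_complex n) w = marginals n (gap_complex n) (ip_table n)"
    and "i \<in> cells {1..n}" "\<not> in_support n i"
  shows "w i = 0"
proof -
  let ?g = "\<lambda>j. if in_support n j then 0 else (1::real)"
  have "{2..n} \<in> gap_complex n"
    by (auto simp: gap_complex_def)
  then have "(\<Sum>i\<in>cells {1..n}. ?g (restrict i {2..n}) * w i)
      = (\<Sum>i\<in>cells {1..n}. ?g (restrict i {2..n}) * ip_table n i)"
    using assms(3) by (intro sum_restrict_mult_eq_if_marginals_eq) auto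
  also have "\<dots> = 0"
    using assms(1) by (intro sum.neutral) (auto simp: in_support_restrict ip_table_def in_support_zero_cell)
  finally have "\<forall>i\<in>cells {1..n}. ?g (restrict i {2..n}) * w i = 0"
    using assms(2) by (subst (asm) sum_nonneg_eq_0_iff) (auto simp: nonneg_table_def finite_cells)
  then show ?thesis
    using assms(1,4,5) by (auto simp: in_support_restrict)
qed

definition unit_cell :: "nat \<Rightarrow> nat \<Rightarrow> nat \<Rightarrow> nat" where
  "unit_cell n c = (zero_cell n)(c := 1)"

lemma unit_cell_in_cells: "c \<in> {1..n} \<Longrightarrow> unit_cell n c \<in> cells {1..n}"
  by (auto simp: unit_cell_def zero_cell_def cells_def PiE_iff extensional_def)

lemma zero_cell_ne_unit_cell: "c \<in> {1..n} \<Longrightarrow> zero_cell n \<noteq> unit_cell n c"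
  by (auto simp: unit_cell_def zero_cell_def dest!: fun_cong[where x = c])

lemma tail_zero_unit_cell: "tail_zero n (unit_cell n 2)"
  by (simp add: tail_zero_def unit_cell_def zero_cell_def)

lemma in_support_unit_cell: "in_support n (unit_cell n 2)"
  by (simp add: in_support_def tail_zero_unit_cell)

lemma tail_zero_cell_cases:
  assumes "n \<ge> 3" "i \<in> cells {1..n}" "i 1 = 0" "tail_zero n i"
  shows "i = zero_cell n \<or> i = unit_cell n 2"
proof -
  let ?j = "if i 2 = 0 then zero_cell n else unit_cell n 2"
  have "i = ?j"
  proof (rule cells_eqI[OF assms(2)])
    show "?j \<in> cells {1..n}"
      using assms(1) zero_cell_in_cells[of n] unit_cell_in_cells[of 2 n] by simp
    fix c assume "c \<in> {1..n}"
    then consider "c = 1" | "c = 2" | "c \<in> {3..n}"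
      by fastforce
    then show "i c = ?j c"
      using assms cell_value[OF assms(2), of 2]
      by cases (auto simp: tail_zero_def unit_cell_def zero_cell_def)
  qed
  then show ?thesis
    by (metis (full_types))
qed

definition dual_functional :: "nat \<Rightarrow> (nat \<Rightarrow> nat) \<Rightarrow> real" where
  "dual_functional n i =
     (\<Sum>T\<in>Pow {3..n} - {{}, {3..n}}. if i 1 = 0 then character T i else 0) / 2
     + (if i 1 = 0 \<and> i 2 = 1 then 1 else 0)"

lemma sum_dual_functional_eq_if_marginals_eq:
  assumes "n \<ge> 3" "marginals n (gap_complex n) w = marginals n (gap_complex n) u"
  shows "(\<Sum>i\<in>cells {1..n}. dual_functional n i * w i) = (\<Sum>i\<in>cells {1..n}. dual_functional n i * u i)"
proof -
  let ?TT = "Pow {3..n} - {{}, {3..n}}"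
  let ?g = "\<lambda>T j. if j 1 = 0 then character T j else (0::real)"
  let ?h = "\<lambda>j. if j 1 = 0 \<and> j 2 = 1 then 1 else (0::real)"
  have split: "(\<Sum>i\<in>cells {1..n}. dual_functional n i * v i)
      = (\<Sum>T\<in>?TT. \<Sum>i\<in>cells {1..n}. ?g T (restrict i (insert 1 T)) * v i) / 2
        + (\<Sum>i\<in>cells {1..n}. ?h (restrict i {1,2}) * v i)" for v
    by (simp add: dual_functional_def character_restrict[OF subset_insertI] distrib_right
        sum_distrib_right sum.distrib sum_divide_distrib sum.swap[of _ ?TT] cong: if_cong)
  have "(\<Sum>T\<in>?TT. \<Sum>i\<in>cells {1..n}. ?g T (restrict i (insert 1 T)) * w i)
      = (\<Sum>T\<in>?TT. \<Sum>i\<in>cells {1..n}. ?g T (restrict i (insert 1 T)) * u i)"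
    by (intro sum.cong refl sum_restrict_mult_eq_if_marginals_eq[OF _ _ assms(2)])
      (auto simp: gap_complex_def)
  moreover have "(\<Sum>i\<in>cells {1..n}. ?h (restrict i {1,2}) * w i)
      = (\<Sum>i\<in>cells {1..n}. ?h (restrict i {1,2}) * u i)"
    using assms(1) by (intro sum_restrict_mult_eq_if_marginals_eq[OF _ _ assms(2)])
      (auto simp: gap_complex_def)
  ultimately show ?thesis
    unfolding split by simp
qed

lemma dual_functional_eq:
  assumes "n \<ge> 3"
  shows "dual_functional n i = (if i 1 = 0
    then ((if tail_zero n i then 2 * scale n else 0) - 1 - character {3..n} i) / 2
         + (if i 2 = 1 then 1 else 0)
    else 0)"
  by (cases "i 1 = 0") (simp_all add: dual_functional_def sum_character_proper_tail[OF assms])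

lemma dual_functional_on_support:
  assumes "n \<ge> 3" "i \<in> cells {1..n}" "in_support n i"
  shows "dual_functional n i
    = (if i = zero_cell n then scale n - 1 else if i = unit_cell n 2 then scale n else 0)"
proof -
  have i2: "i 2 = 0 \<or> i 2 = 1"
    using assms(1,2) by (intro cell_value) auto
  have coords: "zero_cell n 1 = 0" "zero_cell n 2 = 0" "unit_cell n 2 1 = 0" "unit_cell n 2 2 = 1"
    using assms(1) by (simp_all add: zero_cell_def unit_cell_def)
  show ?thesis
  proof (cases "i 1 = 0 \<and> tail_zero n i")
    case True
    then have closed_form: "dual_functional n i = scale n - 1 + (if i 2 = 1 then 1 else 0)"
      using character_tail_zero[of n i] by (simp add: dual_functional_eq[OF assms(1)] field_simps)
    from True consider "i = zero_cell n" | "i = unit_cell n 2"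
      using tail_zero_cell_cases[OF assms(1,2)] by blast
    then show ?thesis
    proof cases
      case 1
      then show ?thesis using closed_form coords by simp
    next
      case 2
      then show ?thesis using closed_form coords zero_cell_ne_unit_cell[of 2 n] assms(1) by simp
    qed
  next
    case False
    have "i \<noteq> zero_cell n"
      using False coords(1) tail_zero_zero_cell[of n] by auto
    moreover have "i \<noteq> unit_cell n 2"
      using False coords(3) tail_zero_unit_cell[of n] by auto
    moreover have "i 1 = 0 \<Longrightarrow> character {3..n} i \<noteq> spin i 2"
      using False assms(3) by (auto simp: in_support_def)
    ultimately show ?thesis
      using False i2 character_cases[of "{3..n}" i]
      by (auto simp: dual_functional_eq[OF assms(1)] spin_def)
  qed
qed

lemma sum_dual_functional_mult:
  assumes "n \<ge> 3" "\<And>i. i \<in> cells {1..n} \<Longrightarrow> \<not> in_support n i \<Longrightarrow> w i = 0"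
  shows "(\<Sum>i\<in>cells {1..n}. dual_functional n i * w i)
    = (scale n - 1) * w (zero_cell n) + scale n * w (unit_cell n 2)"
proof -
  have "dual_functional n i * w i
      = (if i = zero_cell n then (scale n - 1) * w i else 0) + (if i = unit_cell n 2 then scale n * w i else 0)"
    if i: "i \<in> cells {1..n}" for i
  proof (cases "in_support n i")
    case True
    then show ?thesis
      using dual_functional_on_support[OF assms(1) i True] zero_cell_ne_unit_cell[of 2 n] assms(1) by auto
  next
    case False
    then show ?thesis
      using assms(2)[OF i] in_support_zero_cell[of n] in_support_unit_cell[of n] by auto
  qed
  then have "(\<Sum>i\<in>cells {1..n}. dual_functional n i * w i)
      = (\<Sum>i\<in>cells {1..n}. (if i = zero_cell n then (scale n - 1) * w i else 0)
          + (if i = unit_cell n 2 then scale n * w i else 0))"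
    by (rule sum.cong[OF refl])
  also have "\<dots> = (scale n - 1) * w (zero_cell n) + scale n * w (unit_cell n 2)"
    using assms(1) zero_cell_in_cells[of n] unit_cell_in_cells[of 2 n]
    by (simp add: sum.distrib sum.delta finite_cells)
  finally show ?thesis .
qed

lemma weighted_sum_eq_imp_ge:
  fixes a b r :: int
  assumes "r \<ge> 1" "a \<ge> 0" "(r - 1) * a + r * b = (r - 1) ^ 2 + r ^ 2"
  shows "r - 1 \<le> a"
proof -
  have "a + 1 = r * (a + b - 2 * r + 2)"
    using assms(3) by algebra
  then have "r dvd a + 1"
    by (metis dvd_triv_left)
  then show ?thesis
    using assms(2) zdvd_imp_le[of r "a + 1"] by simp
qed

lemma cell_weights_identity:
  assumes "n \<ge> 3" "nonneg_table n w"
    and "marginals n (gap_complex n) w = marginals n (gap_complex n) (ip_table n)"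
  shows "(scale n - 1) * w (zero_cell n) + scale n * w (unit_cell n 2) = (scale n - 1) ^ 2 + scale n ^ 2"
proof -
  have "(scale n - 1) * w (zero_cell n) + scale n * w (unit_cell n 2)
      = (\<Sum>i\<in>cells {1..n}. dual_functional n i * w i)"
    by (rule sum_dual_functional_mult[OF assms(1) vanishes_outside_support[OF assms], symmetric])
  also have "\<dots> = (\<Sum>i\<in>cells {1..n}. dual_functional n i * ip_table n i)"
    by (rule sum_dual_functional_eq_if_marginals_eq[OF assms(1,3)])
  also have "\<dots> = (scale n - 1) ^ 2 + scale n ^ 2"
  proof -
    have "ip_table n (zero_cell n) = scale n - 1" "ip_table n (unit_cell n 2) = scale n"
      using assms(1) zero_cell_ne_unit_cell[of 2 n] in_support_unit_cell[of n]
      by (simp_all add: ip_table_def)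
    moreover have "ip_table n i = 0" if "\<not> in_support n i" for i
      using that in_support_zero_cell[of n] by (auto simp: ip_table_def)
    ultimately show ?thesis
      by (subst sum_dual_functional_mult[OF assms(1)]) (simp_all add: power2_eq_square)
  qed
  finally show ?thesis .
qed

lemma ip_table_optimal:
  assumes "n \<ge> 3" "nonneg_table n w" "integral_table n w"
    and "marginals n (gap_complex n) w = marginals n (gap_complex n) (ip_table n)"
  shows "scale n - 1 \<le> w (zero_cell n)"
proof -
  obtain a where a: "w (zero_cell n) = of_int a"
    using assms(3) zero_cell_in_cells[of n] by (auto simp: integral_table_def elim!: Ints_cases)
  obtain b where b: "w (unit_cell n 2) = of_int b"
    using assms(1,3) unit_cell_in_cells[of 2 n] by (auto simp: integral_table_def elim!: Ints_cases)
  have scale: "scale n = of_int (2 ^ (n - 3))"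
    by (simp add: scale_def)
  have "real_of_int ((2 ^ (n - 3) - 1) * a + 2 ^ (n - 3) * b)
      = real_of_int ((2 ^ (n - 3) - 1) ^ 2 + (2 ^ (n - 3)) ^ 2)"
    using cell_weights_identity[OF assms(1,2,4)] unfolding a b scale by simp
  then have "(2 ^ (n - 3) - 1) * a + 2 ^ (n - 3) * b = (2 ^ (n - 3) - 1) ^ 2 + (2 ^ (n - 3)) ^ 2"
    by (simp only: of_int_eq_iff)
  then have "2 ^ (n - 3) - 1 \<le> a"
    using assms(2) a zero_cell_in_cells[of n]
    by (intro weighted_sum_eq_imp_ge) (auto simp: nonneg_table_def)
  then show ?thesis
    unfolding a scale by linarith
qed

theorem mainTheorem1:
  fixes n :: nat
  assumes "n \<ge> 3"
  shows "\<exists>\<Delta>. simplicial_complex n \<Delta> \<and>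
           gap_minus n \<Delta> \<ge> ereal (2 ^ (n - 3) - 1)"
proof (intro exI conjI)
  show "simplicial_complex n (gap_complex n)"
    by (rule simplicial_complex_gap_complex)
  have "ereal (scale n - 1 - lp_table n (zero_cell n)) \<le> gap_minus n (gap_complex n)"
    using ip_table_optimal[OF assms] nonneg_lp_table[OF assms] marginals_lp_table[OF assms]
    by (intro gap_minus_ge[where u = "ip_table n"] nonneg_ip_table integral_ip_table) auto
  then show "gap_minus n (gap_complex n) \<ge> ereal (2 ^ (n - 3) - 1)"
    using lp_table_zero_cell[OF assms] by (simp add: scale_def)
qed

end
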